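(* Let $n\geq 2$. There is a nonempty Zariski open subset $U\subset\mathbb{R}^n$ such that for every $v\in U$, we have $\max_H|H\cap S_nv|=(n-1)!$, where $H$ ranges over all hyperplanes in $\mathbb{R}^n$ (through the origin).
   Context: The symmetric group $S_n$ acts on $\mathbb{R}^n$ by permuting coordinates; $S_nv$ denotes the orbit of $v$. *)

theory Defs
  imports "HOL-Analysis.Analysis" "HOL-Combinatorics.Permutations"
begin

definition poly_fun :: "(real ^ 'n \<Rightarrow> real) \<Rightarrow> bool" where
  "poly_fun f \<longleftrightarrow> (\<exists>(C :: ('n \<Rightarrow> nat) set) c. finite C \<and>
      f = (\<lambda>x. \<Sum>\<alpha>\<in>C. c \<alpha> * (\<Prod>i\<in>UNIV. (x $ i) ^ (\<alpha> i))))"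

definition zariski_closed :: "(real ^ 'n) set \<Rightarrow> bool" where
  "zariski_closed Z \<longleftrightarrow> (\<exists>P. (\<forall>p\<in>P. poly_fun p) \<and> Z = {x. \<forall>p\<in>P. p x = 0})"

definition zariski_open :: "(real ^ 'n) set \<Rightarrow> bool" where
  "zariski_open U \<longleftrightarrow> zariski_closed (- U)"

definition sym_orbit :: "real ^ 'n \<Rightarrow> (real ^ 'n) set" where
  "sym_orbit v = {(\<chi> i. v $ (\<sigma> i)) | \<sigma>. \<sigma> permutes (UNIV :: 'n set)}"

definition lin_hyperplane :: "(real ^ 'n) set \<Rightarrow> bool" where
  "lin_hyperplane H \<longleftrightarrow> (\<exists>a. a \<noteq> 0 \<and> H = {x. a \<bullet> x = 0})"

end

theory Submission
  imports Defs "HOL-Computational_Algebra.Polynomial"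
begin

text \<open>A permuted copy \<open>\<sigma> v\<close> lies on the hyperplane \<open>a \<bullet> x = 0\<close> iff \<open>\<Sum>i. a i * v (\<sigma> i) = 0\<close>, so the
  bound \<open>(n-1)!\<close> holds for \<open>v\<close> as soon as for every set \<open>A\<close> of more than \<open>(n-1)!\<close> permutations
  the vectors \<open>(v (\<sigma> i))\<^sub>i\<close>, \<open>\<sigma> \<in> A\<close>, span \<open>\<real>\<^sup>n\<close>. Spanning is the non-vanishing of a Gram
  determinant, a polynomial in \<open>v\<close>, so it holds on a Zariski open set once each of these finitely
  many polynomials is nonzero somewhere. That is shown by induction for sets \<open>A\<close> of more than
  \<open>(k-1)!\<close> bijections between \<open>k\<close>-element index sets \<open>I \<rightarrow> J\<close>, for a fixed target \<open>m \<in> J\<close>: if every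
  position is sent to \<open>m\<close> by some \<open>\<sigma> \<in> A\<close>, the vector with entry \<open>1\<close> at \<open>m\<close> and \<open>2\<close> elsewhere works;
  otherwise, by pigeonhole, more than \<open>(k-2)!\<close> of the \<open>\<sigma>\<close> send one position \<open>j\<close> to \<open>m\<close>, and a
  suitable vector for their restrictions to \<open>I - {j}\<close>, with entry \<open>0\<close> at \<open>m\<close>, works for \<open>A\<close>.
  The bound is attained by the hyperplane through the copies fixing one coordinate.\<close>

section \<open>Polynomial functions\<close>

definition monom_fun :: "('n \<Rightarrow> nat) \<Rightarrow> real ^ 'n \<Rightarrow> real" where
  "monom_fun \<alpha> x = (\<Prod>i\<in>UNIV. (x $ i) ^ (\<alpha> i))"

lemma poly_fun_iff_monom_fun:
  "poly_fun f \<longleftrightarrow> (\<exists>C c. finite C \<and> f = (\<lambda>x. \<Sum>\<alpha>\<in>C. c \<alpha> * monom_fun \<alpha> x))"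
  unfolding poly_fun_def monom_fun_def by simp

lemma monom_fun_mult: "monom_fun \<alpha> x * monom_fun \<beta> x = monom_fun (\<lambda>i. \<alpha> i + \<beta> i) x"
  unfolding monom_fun_def by (simp add: prod.distrib[symmetric] power_add)

lemma poly_fun_monom: "poly_fun (\<lambda>x. k * monom_fun \<alpha> x)"
  unfolding poly_fun_iff_monom_fun by (intro exI[of _ "{\<alpha>}"] exI[of _ "\<lambda>_. k"]) simp

lemma poly_fun_const: "poly_fun (\<lambda>x. k)"
  using poly_fun_monom[of k "\<lambda>_. 0"] by (simp add: monom_fun_def)

lemma poly_fun_coord: "poly_fun (\<lambda>x :: real ^ 'n. x $ j)"
proof -
  have "monom_fun (\<lambda>i. if i = j then 1 else 0) x = x $ j" for x :: "real ^ 'n"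
    unfolding monom_fun_def by (simp add: if_distrib[of "power _"] prod.delta cong: if_cong)
  then show ?thesis
    using poly_fun_monom[of 1 "\<lambda>i. if i = j then 1 else 0"] by simp
qed

lemma poly_fun_add:
  assumes "poly_fun p" "poly_fun q"
  shows "poly_fun (\<lambda>x. p x + q x)"
proof -
  obtain C c where C: "finite C" "p = (\<lambda>x. \<Sum>\<alpha>\<in>C. c \<alpha> * monom_fun \<alpha> x)"
    using assms(1) unfolding poly_fun_iff_monom_fun by auto
  obtain D d where D: "finite D" "q = (\<lambda>x. \<Sum>\<alpha>\<in>D. d \<alpha> * monom_fun \<alpha> x)"
    using assms(2) unfolding poly_fun_iff_monom_fun by auto
  define e where "e \<alpha> = (if \<alpha> \<in> C then c \<alpha> else 0) + (if \<alpha> \<in> D then d \<alpha> else 0)" for \<alpha>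
  have "p x + q x = (\<Sum>\<alpha>\<in>C \<union> D. e \<alpha> * monom_fun \<alpha> x)" for x
  proof -
    have "p x = (\<Sum>\<alpha>\<in>C \<union> D. (if \<alpha> \<in> C then c \<alpha> else 0) * monom_fun \<alpha> x)"
      unfolding C(2) by (rule sum.mono_neutral_cong_left) (use C D in auto)
    moreover have "q x = (\<Sum>\<alpha>\<in>C \<union> D. (if \<alpha> \<in> D then d \<alpha> else 0) * monom_fun \<alpha> x)"
      unfolding D(2) by (rule sum.mono_neutral_cong_left) (use C D in auto)
    ultimately show ?thesis
      unfolding e_def by (simp add: distrib_right sum.distrib)
  qed
  then show ?thesis
    unfolding poly_fun_iff_monom_fun using C(1) D(1) by (intro exI[of _ "C \<union> D"] exI[of _ e]) auto
qed

lemma poly_fun_sum: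
  assumes "finite S" "\<And>s. s \<in> S \<Longrightarrow> poly_fun (f s)"
  shows "poly_fun (\<lambda>x. \<Sum>s\<in>S. f s x)"
  using assms by (induction S rule: finite_induct) (simp_all add: poly_fun_const poly_fun_add)

lemma poly_fun_mult:
  assumes "poly_fun p" "poly_fun q"
  shows "poly_fun (\<lambda>x. p x * q x)"
proof -
  obtain C c where C: "finite C" "p = (\<lambda>x. \<Sum>\<alpha>\<in>C. c \<alpha> * monom_fun \<alpha> x)"
    using assms(1) unfolding poly_fun_iff_monom_fun by auto
  obtain D d where D: "finite D" "q = (\<lambda>x. \<Sum>\<beta>\<in>D. d \<beta> * monom_fun \<beta> x)"
    using assms(2) unfolding poly_fun_iff_monom_fun by auto
  have "(\<lambda>x. p x * q x) =
      (\<lambda>x. \<Sum>\<alpha>\<in>C. \<Sum>\<beta>\<in>D. (c \<alpha> * d \<beta>) * monom_fun (\<lambda>i. \<alpha> i + \<beta> i) x)"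
    unfolding C(2) D(2) by (simp add: sum_product monom_fun_mult[symmetric] mult_ac)
  moreover have "poly_fun \<dots>"
    using C(1) D(1) by (intro poly_fun_sum poly_fun_monom)
  ultimately show ?thesis by simp
qed

lemma poly_fun_prod:
  assumes "finite S" "\<And>s. s \<in> S \<Longrightarrow> poly_fun (f s)"
  shows "poly_fun (\<lambda>x. \<Prod>s\<in>S. f s x)"
  using assms by (induction S rule: finite_induct) (simp_all add: poly_fun_const poly_fun_mult)

lemma poly_fun_diff:
  assumes "poly_fun p" "poly_fun q"
  shows "poly_fun (\<lambda>x. p x - q x)"
  using poly_fun_add[OF assms(1) poly_fun_mult[OF poly_fun_const[of "-1"] assms(2)]] by simp

lemma poly_fun_on_line:
  fixes x y :: "real ^ 'n"
  assumes "poly_fun p"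
  obtains P where "\<And>t. p (x + t *\<^sub>R (y - x)) = poly P t"
proof -
  obtain C c where C: "p = (\<lambda>x. \<Sum>\<alpha>\<in>C. c \<alpha> * monom_fun \<alpha> x)"
    using assms unfolding poly_fun_iff_monom_fun by blast
  define P where
    "P = (\<Sum>\<alpha>\<in>C. [:c \<alpha>:] * (\<Prod>i\<in>UNIV. [:x $ i, y $ i - x $ i:] ^ (\<alpha> i)))"
  have "p (x + t *\<^sub>R (y - x)) = poly P t" for t
    unfolding C P_def poly_sum poly_mult poly_prod poly_power monom_fun_def
    by (intro sum.cong refl arg_cong2[where f = "(*)"] prod.cong arg_cong2[where f = power])
      (simp_all add: algebra_simps)
  then show ?thesis by (rule that)
qed

text \<open>Restricted to the line through a non-root of \<open>p\<close> and a non-root of \<open>q\<close>, both become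
  nonzero univariate polynomials, which have only finitely many roots.\<close>
lemma poly_fun_common_nonroot:
  assumes "poly_fun p" "poly_fun q" "p x \<noteq> 0" "q y \<noteq> 0"
  obtains z where "p z \<noteq> 0" "q z \<noteq> 0"
proof -
  obtain P where P: "\<And>t. p (x + t *\<^sub>R (y - x)) = poly P t"
    using poly_fun_on_line[where x = x and y = y, OF assms(1)] by blast
  obtain Q where Q: "\<And>t. q (x + t *\<^sub>R (y - x)) = poly Q t"
    using poly_fun_on_line[where x = x and y = y, OF assms(2)] by blast
  have "P \<noteq> 0" using P[of 0] assms(3) by auto
  moreover have "Q \<noteq> 0" using Q[of 1] assms(4) by auto
  ultimately have "finite ({t. poly P t = 0} \<union> {t. poly Q t = 0})"
    by (simp add: poly_roots_finite)
  then obtain t :: real where "t \<notin> {t. poly P t = 0} \<union> {t. poly Q t = 0}"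
    using ex_new_if_finite[OF infinite_UNIV_char_0] by blast
  then show ?thesis using that[of "x + t *\<^sub>R (y - x)"] P Q by simp
qed

lemma poly_funs_common_nonroot:
  assumes "finite F" "\<And>f. f \<in> F \<Longrightarrow> poly_fun f" "\<And>f. f \<in> F \<Longrightarrow> \<exists>x. f x \<noteq> 0"
  shows "\<exists>x. \<forall>f\<in>F. f x \<noteq> 0"
proof -
  have "\<exists>x. (\<Prod>f\<in>F. f x) \<noteq> 0"
    using assms
  proof (induction F rule: finite_induct)
    case (insert g F)
    obtain x where "(\<Prod>f\<in>F. f x) \<noteq> 0" using insert.IH insert.prems by blast
    moreover obtain y where "g y \<noteq> 0" using insert.prems(2)[of g] by blast
    moreover have "poly_fun (\<lambda>x. \<Prod>f\<in>F. f x)" using insert by (intro poly_fun_prod) auto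
    ultimately obtain z where "(\<Prod>f\<in>F. f z) \<noteq> 0" "g z \<noteq> 0"
      using poly_fun_common_nonroot insert.prems(1)[of g] by blast
    then show ?case using insert.hyps by auto
  qed simp
  then show ?thesis using assms(1) by auto
qed

lemma zariski_open_common_nonroots:
  assumes "finite F" "\<And>f. f \<in> F \<Longrightarrow> poly_fun f"
  shows "zariski_open {x. \<forall>f\<in>F. f x \<noteq> 0}"
  unfolding zariski_open_def zariski_closed_def
  using assms by (intro exI[of _ "{\<lambda>x. \<Prod>f\<in>F. f x}"]) (auto intro: poly_fun_prod)

section \<open>Spanning by reindexed vectors\<close>

definition reindex_on :: "'n set \<Rightarrow> ('n \<Rightarrow> 'n) \<Rightarrow> real ^ 'n \<Rightarrow> real ^ 'n" where
  "reindex_on I \<sigma> x = (\<chi> i. if i \<in> I then x $ \<sigma> i else 0)"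

text \<open>The vectors \<open>reindex_on I \<sigma> x\<close>, \<open>\<sigma> \<in> A\<close>, span the coordinate subspace indexed by \<open>I\<close>.\<close>
definition reindexings_span :: "'n set \<Rightarrow> ('n \<Rightarrow> 'n) set \<Rightarrow> real ^ 'n \<Rightarrow> bool" where
  "reindexings_span I A x \<longleftrightarrow> (\<forall>a :: real ^ 'n. (\<forall>i. i \<notin> I \<longrightarrow> a $ i = 0) \<longrightarrow>
      (\<forall>\<sigma>\<in>A. (\<Sum>i\<in>I. a $ i * x $ \<sigma> i) = 0) \<longrightarrow> a = 0)"

text \<open>The identity block on the coordinates outside \<open>I\<close> makes the determinant detect spanning
  of the subspace indexed by \<open>I\<close> rather than of the whole space.\<close>
definition gram_matrix :: "'n set \<Rightarrow> ('n \<Rightarrow> 'n) set \<Rightarrow> real ^ 'n \<Rightarrow> real ^ 'n ^ 'n" where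
  "gram_matrix I A x = (\<chi> i i'. (\<Sum>\<sigma>\<in>A. reindex_on I \<sigma> x $ i * reindex_on I \<sigma> x $ i') +
      (if i = i' \<and> i \<notin> I then 1 else 0))"

lemma reindexings_span_empty: "reindexings_span {} A x"
  unfolding reindexings_span_def by (simp add: vec_eq_iff)

lemma inner_reindex_on: "reindex_on I \<sigma> x \<bullet> a = (\<Sum>i\<in>I. a $ i * x $ \<sigma> i)"
proof -
  have "reindex_on I \<sigma> x \<bullet> a = (\<Sum>i\<in>UNIV. if i \<in> I then a $ i * x $ \<sigma> i else 0)"
    unfolding inner_vec_def reindex_on_def by (intro sum.cong) auto
  then show ?thesis by (simp add: sum.If_cases)
qed

lemma poly_fun_det_gram_matrix:
  fixes I :: "'n :: finite set"
  assumes "finite A"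
  shows "poly_fun (\<lambda>x. det (gram_matrix I A x))"
proof -
  have "poly_fun (\<lambda>x. reindex_on I \<sigma> x $ i)" for \<sigma> i
    by (cases "i \<in> I") (simp_all add: reindex_on_def poly_fun_coord poly_fun_const)
  then have "poly_fun (\<lambda>x. (\<Sum>\<sigma>\<in>A. reindex_on I \<sigma> x $ i * reindex_on I \<sigma> x $ i') +
      (if i = i' \<and> i \<notin> I then 1 else 0))" for i i'
    using assms by (intro poly_fun_add poly_fun_sum poly_fun_mult poly_fun_const)
  then have "poly_fun (\<lambda>x. gram_matrix I A x $ i $ i')" for i i'
    by (simp add: gram_matrix_def)
  then show ?thesis
    unfolding det_def
    by (intro poly_fun_sum poly_fun_mult poly_fun_const poly_fun_prod) (simp_all add: finite_permutations)
qed

lemma gram_matrix_mult: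
  "gram_matrix I A x *v a =
    (\<Sum>\<sigma>\<in>A. (reindex_on I \<sigma> x \<bullet> a) *\<^sub>R reindex_on I \<sigma> x) + (\<chi> i. if i \<notin> I then a $ i else 0)"
proof -
  let ?r = "\<lambda>\<sigma> i. reindex_on I \<sigma> x $ i"
  have "(gram_matrix I A x *v a) $ i =
      (\<Sum>\<sigma>\<in>A. ?r \<sigma> i * (\<Sum>j\<in>UNIV. ?r \<sigma> j * a $ j)) + (if i \<notin> I then a $ i else 0)" for i
  proof -
    have "(gram_matrix I A x *v a) $ i =
        (\<Sum>j\<in>UNIV. (\<Sum>\<sigma>\<in>A. ?r \<sigma> i * ?r \<sigma> j) * a $ j) +
        (\<Sum>j\<in>UNIV. if i = j \<and> i \<notin> I then a $ j else 0)"
      unfolding matrix_vector_mult_def gram_matrix_def sum.distrib[symmetric]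
      by (simp add: distrib_right, intro sum.cong) auto
    also have "\<dots> = (\<Sum>\<sigma>\<in>A. ?r \<sigma> i * (\<Sum>j\<in>UNIV. ?r \<sigma> j * a $ j)) +
        (if i \<notin> I then a $ i else 0)"
      by (cases "i \<in> I")
        (simp_all add: sum_distrib_left sum_distrib_right mult_ac sum.swap[of _ A UNIV])
    finally show ?thesis .
  qed
  then show ?thesis by (simp add: vec_eq_iff inner_vec_def mult_ac)
qed

lemma inner_gram_matrix_mult:
  "a \<bullet> (gram_matrix I A x *v a) =
    (\<Sum>\<sigma>\<in>A. (reindex_on I \<sigma> x \<bullet> a)\<^sup>2) + (\<Sum>i\<in>-I. (a $ i)\<^sup>2)"
proof -
  have "a \<bullet> (\<chi> i. if i \<notin> I then a $ i else 0) = (\<Sum>i\<in>-I. (a $ i)\<^sup>2)"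
    unfolding inner_vec_def by (simp add: if_distrib power2_eq_square sum.If_cases Compl_eq)
  then show ?thesis
    by (simp add: gram_matrix_mult inner_add_right inner_sum_right inner_commute power2_eq_square)
qed

lemma reindexings_span_iff_det_gram_matrix:
  fixes I :: "'n :: finite set"
  assumes "finite A"
  shows "reindexings_span I A x \<longleftrightarrow> det (gram_matrix I A x) \<noteq> 0"
proof
  assume span: "reindexings_span I A x"
  show "det (gram_matrix I A x) \<noteq> 0"
  proof
    assume "det (gram_matrix I A x) = 0"
    then obtain a where a: "gram_matrix I A x *v a = 0" "a \<noteq> 0"
      using invertible_det_nz matrix_left_invertible_ker invertible_left_inverse by metis
    then have "(\<Sum>\<sigma>\<in>A. (reindex_on I \<sigma> x \<bullet> a)\<^sup>2) + (\<Sum>i\<in>-I. (a $ i)\<^sup>2) = 0"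
      using inner_gram_matrix_mult[of a I A x] by simp
    then have "(\<Sum>\<sigma>\<in>A. (reindex_on I \<sigma> x \<bullet> a)\<^sup>2) = 0" "(\<Sum>i\<in>-I. (a $ i)\<^sup>2) = 0"
      by (simp_all add: add_nonneg_eq_0_iff sum_nonneg)
    then have "\<forall>\<sigma>\<in>A. reindex_on I \<sigma> x \<bullet> a = 0" "\<forall>i. i \<notin> I \<longrightarrow> a $ i = 0"
      using assms by (simp_all add: sum_nonneg_eq_0_iff)
    then show False
      using span a(2) unfolding reindexings_span_def inner_reindex_on by blast
  qed
next
  assume "det (gram_matrix I A x) \<noteq> 0"
  then have inv: "invertible (gram_matrix I A x)" by (simp add: invertible_det_nz)
  show "reindexings_span I A x"
    unfolding reindexings_span_def
  proof (intro allI impI)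
    fix a :: "real ^ 'n"
    assume "\<forall>i. i \<notin> I \<longrightarrow> a $ i = 0" "\<forall>\<sigma>\<in>A. (\<Sum>i\<in>I. a $ i * x $ \<sigma> i) = 0"
    then have "gram_matrix I A x *v a = 0"
      unfolding gram_matrix_mult by (simp add: inner_reindex_on vec_eq_iff)
    then show "a = 0"
      using inv matrix_left_invertible_ker invertible_left_inverse by metis
  qed
qed

section \<open>Spanning by large sets of bijections\<close>

definition ext_bijections :: "'a set \<Rightarrow> 'b set \<Rightarrow> ('a \<Rightarrow> 'b) set" where
  "ext_bijections I J = {\<sigma> \<in> extensional I. bij_betw \<sigma> I J}"

lemma card_ext_bijections_le:
  assumes "finite I" "finite J" "card I = card J"
  shows "card (ext_bijections I J) \<le> fact (card I)"
proof -
  obtain h where h: "bij_betw h J I" using finite_same_card_bij assms by metis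
  define \<Phi> where "\<Phi> \<tau> i = (if i \<in> I then h (\<tau> i) else i)" for \<tau> i
  have "\<Phi> \<tau> permutes I" if "\<tau> \<in> ext_bijections I J" for \<tau>
  proof (rule bij_imp_permutes)
    have "bij_betw (h \<circ> \<tau>) I I"
      using that h unfolding ext_bijections_def by (auto intro: bij_betw_trans)
    then show "bij_betw (\<Phi> \<tau>) I I" by (rule bij_betw_cong[THEN iffD1, rotated]) (simp add: \<Phi>_def)
  qed (simp add: \<Phi>_def)
  moreover have "inj_on \<Phi> (ext_bijections I J)"
  proof (rule inj_onI)
    fix \<tau>1 \<tau>2 assume \<tau>: "\<tau>1 \<in> ext_bijections I J" "\<tau>2 \<in> ext_bijections I J" "\<Phi> \<tau>1 = \<Phi> \<tau>2"
    show "\<tau>1 = \<tau>2"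
    proof
      fix i
      show "\<tau>1 i = \<tau>2 i"
      proof (cases "i \<in> I")
        case True
        then have "h (\<tau>1 i) = h (\<tau>2 i)" "\<tau>1 i \<in> J" "\<tau>2 i \<in> J"
          using fun_cong[OF \<tau>(3), of i] \<tau>(1,2)
          unfolding \<Phi>_def ext_bijections_def bij_betw_def by auto
        then show ?thesis using h unfolding bij_betw_def inj_on_def by blast
      next
        case False
        then show ?thesis using \<tau>(1,2) unfolding ext_bijections_def extensional_def by auto
      qed
    qed
  qed
  ultimately have "card (ext_bijections I J) \<le> card {p. p permutes I}"
    using assms(1) by (intro card_inj_on_le) (auto simp: finite_permutations)
  then show ?thesis using assms(1) by (simp add: card_permutations)
qed

lemma restrict_in_ext_bijections:
  assumes "\<sigma> \<in> ext_bijections I J" "j \<in> I"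
  shows "restrict \<sigma> (I - {j}) \<in> ext_bijections (I - {j}) (J - {\<sigma> j})"
proof -
  have "bij_betw \<sigma> (I - {j}) (J - {\<sigma> j})"
    using assms by (intro bij_betw_DiffI) (auto simp: ext_bijections_def bij_betw_def)
  then show ?thesis
    unfolding ext_bijections_def by (simp add: bij_betw_cong[of "I - {j}" "restrict \<sigma> (I - {j})"])
qed

lemma inj_on_restrict_fibre:
  assumes "A \<subseteq> ext_bijections I J" "j \<in> I"
  shows "inj_on (\<lambda>\<sigma>. restrict \<sigma> (I - {j})) {\<sigma> \<in> A. \<sigma> j = m}"
proof (rule inj_onI)
  fix \<sigma>1 \<sigma>2
  assume \<sigma>: "\<sigma>1 \<in> {\<sigma> \<in> A. \<sigma> j = m}" "\<sigma>2 \<in> {\<sigma> \<in> A. \<sigma> j = m}"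
    and eq: "restrict \<sigma>1 (I - {j}) = restrict \<sigma>2 (I - {j})"
  show "\<sigma>1 = \<sigma>2"
  proof
    fix i
    have "\<sigma>1 \<in> extensional I" "\<sigma>2 \<in> extensional I"
      using \<sigma> assms(1) unfolding ext_bijections_def by auto
    then show "\<sigma>1 i = \<sigma>2 i"
      using \<sigma> fun_cong[OF eq, of i] by (cases "i \<in> I - {j}") (auto simp: extensional_def)
  qed
qed

lemma exists_large_fibre:
  fixes A :: "('a :: finite \<Rightarrow> 'b) set"
  assumes "A \<subseteq> ext_bijections I J" "card I = Suc k" "fact k < card A"
    and "m \<in> J" "j0 \<in> I" "\<forall>\<sigma>\<in>A. \<sigma> j0 \<noteq> m"
  shows "\<exists>j\<in>I. fact (k - 1) < card {\<sigma> \<in> A. \<sigma> j = m}"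
proof (rule ccontr)
  assume "\<not> ?thesis"
  then have small: "card {\<sigma> \<in> A. \<sigma> j = m} \<le> fact (k - 1)" if "j \<in> I" for j
    using that by (simp add: not_less)
  have "A \<subseteq> (\<Union>j\<in>I - {j0}. {\<sigma> \<in> A. \<sigma> j = m})"
  proof
    fix \<sigma> assume "\<sigma> \<in> A"
    then have "m \<in> \<sigma> ` I" "\<sigma> j0 \<noteq> m"
      using assms(1,4,6) unfolding ext_bijections_def bij_betw_def by auto
    then show "\<sigma> \<in> (\<Union>j\<in>I - {j0}. {\<sigma> \<in> A. \<sigma> j = m})" using \<open>\<sigma> \<in> A\<close> by auto
  qed
  moreover have "finite A" using assms(3) card.infinite by force
  ultimately have "card A \<le> card (\<Union>j\<in>I - {j0}. {\<sigma> \<in> A. \<sigma> j = m})"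
    by (intro card_mono) auto
  also have "\<dots> \<le> (\<Sum>j\<in>I - {j0}. card {\<sigma> \<in> A. \<sigma> j = m})"
    by (rule card_UN_le) simp
  also have "\<dots> \<le> (\<Sum>j\<in>I - {j0}. fact (k - 1))"
    using small by (intro sum_mono) auto
  also have "\<dots> = k * fact (k - 1)"
    using assms(2,5) by (simp add: card_Diff_singleton)
  also have "\<dots> \<le> fact k"
    by (cases k) auto
  finally show False using assms(3) by simp
qed

lemma reindexings_span_if_all_hit:
  fixes I :: "'n :: finite set"
  assumes inj: "\<forall>\<sigma>\<in>A. inj_on \<sigma> I" and hit: "\<forall>j\<in>I. \<exists>\<sigma>\<in>A. \<sigma> j = m"
  shows "reindexings_span I A (\<chi> c. if c = m then 1 else 2)"
  unfolding reindexings_span_def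
proof (intro allI impI)
  fix a :: "real ^ 'n"
  assume supp: "\<forall>i. i \<notin> I \<longrightarrow> a $ i = 0"
    and orth: "\<forall>\<sigma>\<in>A. (\<Sum>i\<in>I. a $ i * (\<chi> c. if c = m then 1 else 2) $ \<sigma> i) = 0"
  define s where "s = (\<Sum>i\<in>I. a $ i)"
  have a_eq: "a $ j = 2 * s" if "j \<in> I" for j
  proof -
    obtain \<sigma> where \<sigma>: "\<sigma> \<in> A" "\<sigma> j = m" using hit \<open>j \<in> I\<close> by blast
    have hits_m: "\<sigma> i = m \<longleftrightarrow> i = j" if "i \<in> I" for i
      using inj \<sigma> \<open>i \<in> I\<close> \<open>j \<in> I\<close> unfolding inj_on_def by metis
    have "0 = (\<Sum>i\<in>I. a $ i * (\<chi> c. if c = m then 1 else 2) $ \<sigma> i)"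
      using orth \<sigma>(1) by simp
    also have "\<dots> = (\<Sum>i\<in>I. 2 * a $ i - (if i = j then a $ i else 0))"
      by (rule sum.cong) (simp_all add: hits_m)
    also have "\<dots> = 2 * s - a $ j"
      using \<open>j \<in> I\<close> by (simp add: sum_subtractf sum_distrib_left s_def)
    finally show ?thesis by simp
  qed
  have "s = (\<Sum>i\<in>I. a $ i)" by (fact s_def)
  also have "\<dots> = (\<Sum>i\<in>I. 2 * s)" by (rule sum.cong) (simp_all add: a_eq)
  finally have "s * (2 * real (card I) - 1) = 0" by (simp add: algebra_simps)
  moreover have "2 * real (card I) - 1 \<noteq> 0"
  proof
    assume "2 * real (card I) - 1 = 0"
    then have "2 * card I = 1" by linarith
    then show False by presburger
  qed
  ultimately have "s = 0" by simp
  then show "a = 0" using a_eq supp by (auto simp: vec_eq_iff)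
qed

text \<open>Zeroing the \<open>m\<close>-th coordinate removes the \<open>j\<close>-th term from the equations of every \<open>\<sigma>\<close>
  with \<open>\<sigma> j = m\<close>, which turns them into the equations of their restrictions; a single \<open>\<sigma>'\<close>
  with \<open>\<sigma>' j \<noteq> m\<close> then forces \<open>a $ j = 0\<close>, because \<open>z $ \<sigma>' j \<noteq> 0\<close>.\<close>
lemma reindexings_span_extend:
  fixes I :: "'n :: finite set"
  assumes "j \<in> I" and inj: "\<forall>\<sigma>\<in>A. inj_on \<sigma> I"
    and span: "reindexings_span (I - {j}) ((\<lambda>\<sigma>. restrict \<sigma> (I - {j})) ` {\<sigma> \<in> A. \<sigma> j = m}) z"
    and \<sigma>': "\<sigma>' \<in> A" "\<sigma>' j \<noteq> m" "z $ \<sigma>' j \<noteq> 0"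
  shows "reindexings_span I A (\<chi> c. if c = m then 0 else z $ c)"
  unfolding reindexings_span_def
proof (intro allI impI)
  define x :: "real ^ 'n" where "x = (\<chi> c. if c = m then 0 else z $ c)"
  fix a :: "real ^ 'n"
  assume supp: "\<forall>i. i \<notin> I \<longrightarrow> a $ i = 0"
    and orth_z: "\<forall>\<sigma>\<in>A. (\<Sum>i\<in>I. a $ i * (\<chi> c. if c = m then 0 else z $ c) $ \<sigma> i) = 0"
  have orth: "\<forall>\<sigma>\<in>A. (\<Sum>i\<in>I. a $ i * x $ \<sigma> i) = 0" using orth_z unfolding x_def .
  define a' :: "real ^ 'n" where "a' = (\<chi> i. if i = j then 0 else a $ i)"
  have supp': "a' $ i = 0" if "i \<notin> I - {j}" for i using supp that unfolding a'_def by auto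
  have "a' = 0"
  proof (rule span[unfolded reindexings_span_def, rule_format, OF supp'])
    fix \<tau> assume "\<tau> \<in> (\<lambda>\<sigma>. restrict \<sigma> (I - {j})) ` {\<sigma> \<in> A. \<sigma> j = m}"
    then obtain \<sigma> where \<sigma>: "\<sigma> \<in> A" "\<sigma> j = m" and \<tau>: "\<tau> = restrict \<sigma> (I - {j})" by blast
    have "\<sigma> i \<noteq> m" if "i \<in> I - {j}" for i
      using inj \<sigma> that \<open>j \<in> I\<close> unfolding inj_on_def by blast
    then have "(\<Sum>i\<in>I - {j}. a' $ i * z $ \<tau> i) = (\<Sum>i\<in>I - {j}. a $ i * x $ \<sigma> i)"
      unfolding a'_def x_def \<tau> by (intro sum.cong) auto
    also have "\<dots> = (\<Sum>i\<in>I. a $ i * x $ \<sigma> i) - a $ j * x $ \<sigma> j"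
      using \<open>j \<in> I\<close> by (simp add: sum_diff1)
    also have "\<dots> = 0" using orth \<sigma> unfolding x_def by simp
    finally show "(\<Sum>i\<in>I - {j}. a' $ i * z $ \<tau> i) = 0" .
  qed
  have a_other: "a $ i = 0" if "i \<noteq> j" for i
  proof -
    have "a' $ i = 0" using \<open>a' = 0\<close> by simp
    then show ?thesis using that unfolding a'_def by simp
  qed
  have "0 = (\<Sum>i\<in>I. a $ i * x $ \<sigma>' i)" using orth \<sigma>'(1) by simp
  also have "\<dots> = a $ j * x $ \<sigma>' j + (\<Sum>i\<in>I - {j}. a $ i * x $ \<sigma>' i)"
    using \<open>j \<in> I\<close> by (simp add: sum.remove)
  also have "(\<Sum>i\<in>I - {j}. a $ i * x $ \<sigma>' i) = 0"
    using a_other by (intro sum.neutral) auto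
  finally have "a $ j = 0" using \<sigma>'(2,3) unfolding x_def by simp
  then have "a $ i = 0" for i using a_other by (cases "i = j") simp_all
  then show "a = 0" by (simp add: vec_eq_iff)
qed

lemma reindexings_span_nonzero_coord:
  fixes I :: "'n :: finite set"
  assumes "reindexings_span I B y"
  obtains z where "reindexings_span I B z" "z $ b \<noteq> 0"
proof -
  have "finite B" by simp
  have "\<exists>z. \<forall>f\<in>{\<lambda>z. det (gram_matrix I B z), \<lambda>z. z $ b}. f z \<noteq> 0"
  proof (rule poly_funs_common_nonroot)
    show "\<exists>z. f z \<noteq> 0" if "f \<in> {\<lambda>z. det (gram_matrix I B z), \<lambda>z. z $ b}" for f
      using that assms reindexings_span_iff_det_gram_matrix
      by (auto intro: exI[of _ "axis b 1"])
  qed (use \<open>finite B\<close> in \<open>auto simp: poly_fun_det_gram_matrix poly_fun_coord\<close>)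
  then show ?thesis
    using that reindexings_span_iff_det_gram_matrix[OF \<open>finite B\<close>] by auto
qed

lemma reindexings_span_exists:
  fixes I J :: "'n :: finite set"
  assumes "card I = k" "card J = k" "A \<subseteq> ext_bijections I J" "fact (k - 1) < card A"
  shows "\<exists>x. reindexings_span I A x"
  using assms
proof (induction k arbitrary: I J A)
  case 0
  then show ?case using reindexings_span_empty by auto
next
  case (Suc k)
  have "J \<noteq> {}" using Suc.prems(2) by auto
  then obtain m where "m \<in> J" by blast
  have inj: "\<forall>\<sigma>\<in>A. inj_on \<sigma> I"
    using Suc.prems(3) unfolding ext_bijections_def bij_betw_def by blast
  show ?case
  proof (cases "\<forall>j\<in>I. \<exists>\<sigma>\<in>A. \<sigma> j = m")
    case True
    then show ?thesis using reindexings_span_if_all_hit inj by blast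
  next
    case False
    then obtain j0 where "j0 \<in> I" "\<forall>\<sigma>\<in>A. \<sigma> j0 \<noteq> m" by blast
    moreover have large_A: "fact k < card A" using Suc.prems(4) by simp
    ultimately obtain j where "j \<in> I" and large: "fact (k - 1) < card {\<sigma> \<in> A. \<sigma> j = m}"
      using exists_large_fibre[OF Suc.prems(3,1) _ \<open>m \<in> J\<close>] by blast
    define B where "B = (\<lambda>\<sigma>. restrict \<sigma> (I - {j})) ` {\<sigma> \<in> A. \<sigma> j = m}"
    have card_B: "card B = card {\<sigma> \<in> A. \<sigma> j = m}"
      unfolding B_def using inj_on_restrict_fibre[OF Suc.prems(3) \<open>j \<in> I\<close>] by (rule card_image)
    have B_sub: "B \<subseteq> ext_bijections (I - {j}) (J - {m})"
      unfolding B_def using Suc.prems(3) \<open>j \<in> I\<close> restrict_in_ext_bijections by fastforce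
    have card_Ij: "card (I - {j}) = k" and card_Jm: "card (J - {m}) = k"
      using Suc.prems(1,2) \<open>j \<in> I\<close> \<open>m \<in> J\<close> by simp_all
    obtain y where "reindexings_span (I - {j}) B y"
      using Suc.IH[OF card_Ij card_Jm B_sub] card_B large by auto
    have "card B \<le> fact k"
      using card_ext_bijections_le[of "I - {j}" "J - {m}"] card_mono[OF _ B_sub] card_Ij card_Jm
      by simp
    then have "{\<sigma> \<in> A. \<sigma> j = m} \<noteq> A" using card_B large_A by auto
    then obtain \<sigma>' where \<sigma>': "\<sigma>' \<in> A" "\<sigma>' j \<noteq> m" by blast
    then obtain z where "reindexings_span (I - {j}) B z" "z $ \<sigma>' j \<noteq> 0"
      using reindexings_span_nonzero_coord \<open>reindexings_span (I - {j}) B y\<close> by blast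
    then show ?thesis
      using reindexings_span_extend[OF \<open>j \<in> I\<close> inj _ \<sigma>'] unfolding B_def by blast
  qed
qed

section \<open>Hyperplane sections of the orbit\<close>

lemma sym_orbit_eq_image: "sym_orbit v = (\<lambda>\<sigma>. \<chi> i. v $ \<sigma> i) ` {\<sigma>. \<sigma> permutes UNIV}"
  unfolding sym_orbit_def by auto

lemma permutes_Diff_singleton_iff: "\<sigma> permutes (S - {a}) \<longleftrightarrow> \<sigma> permutes S \<and> \<sigma> a = a"
proof
  assume "\<sigma> permutes (S - {a})"
  then show "\<sigma> permutes S \<and> \<sigma> a = a"
    using permutes_subset[of \<sigma> "S - {a}" S] permutes_not_in[of \<sigma> "S - {a}" a] by auto
next
  assume "\<sigma> permutes S \<and> \<sigma> a = a"
  then show "\<sigma> permutes (S - {a})"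
    by (auto simp: permutes_def)
qed

lemma exists_reindexings_span_perms:
  fixes A :: "('n :: finite \<Rightarrow> 'n) set"
  assumes "A \<subseteq> {\<sigma>. \<sigma> permutes UNIV}" "fact (CARD('n) - 1) < card A"
  shows "\<exists>x. reindexings_span UNIV A x"
proof (rule reindexings_span_exists)
  show "A \<subseteq> ext_bijections UNIV UNIV"
    using assms(1) by (auto simp: ext_bijections_def permutes_imp_bij)
qed (use assms(2) in simp_all)

lemma card_hyperplane_Int_sym_orbit_le:
  fixes v :: "real ^ 'n"
  assumes span: "\<And>A. A \<subseteq> {\<sigma>. \<sigma> permutes UNIV} \<Longrightarrow> k < card A \<Longrightarrow> reindexings_span UNIV A v"
    and "lin_hyperplane H"
  shows "card (H \<inter> sym_orbit v) \<le> k"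
proof -
  obtain a :: "real ^ 'n" where a: "a \<noteq> 0" "H = {x. a \<bullet> x = 0}"
    using \<open>lin_hyperplane H\<close> unfolding lin_hyperplane_def by blast
  define A where "A = {\<sigma>. \<sigma> permutes UNIV \<and> a \<bullet> (\<chi> i. v $ \<sigma> i) = 0}"
  have "finite A" by simp
  have "H \<inter> sym_orbit v \<subseteq> (\<lambda>\<sigma>. \<chi> i. v $ \<sigma> i) ` A"
    unfolding a(2) sym_orbit_eq_image A_def by auto
  then have "card (H \<inter> sym_orbit v) \<le> card ((\<lambda>\<sigma>. \<chi> i. v $ \<sigma> i) ` A)"
    using \<open>finite A\<close> by (intro card_mono) simp_all
  also have "\<dots> \<le> card A"
    using \<open>finite A\<close> by (rule card_image_le)
  finally have "card (H \<inter> sym_orbit v) \<le> card A" .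
  moreover have "card A \<le> k"
  proof (rule ccontr)
    assume "\<not> card A \<le> k"
    then have "reindexings_span UNIV A v" by (intro span) (auto simp: A_def)
    moreover have "\<forall>\<sigma>\<in>A. (\<Sum>i\<in>UNIV. a $ i * v $ \<sigma> i) = 0"
      unfolding A_def inner_vec_def by simp
    ultimately show False using a(1) unfolding reindexings_span_def by blast
  qed
  ultimately show ?thesis by simp
qed

lemma inj_permuted_copies:
  fixes v :: "real ^ 'n"
  assumes "\<And>i j. i \<noteq> j \<Longrightarrow> v $ i \<noteq> v $ j"
  shows "inj (\<lambda>\<sigma> :: 'n \<Rightarrow> 'n. \<chi> i. v $ \<sigma> i)"
proof (rule injI)
  fix \<sigma>1 \<sigma>2 :: "'n \<Rightarrow> 'n"
  assume "(\<chi> i. v $ \<sigma>1 i) = (\<chi> i. v $ \<sigma>2 i)"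
  then have "v $ \<sigma>1 i = v $ \<sigma>2 i" for i by (simp add: vec_eq_iff)
  then have "\<sigma>1 i = \<sigma>2 i" for i using assms[of "\<sigma>1 i" "\<sigma>2 i"] by auto
  then show "\<sigma>1 = \<sigma>2" by (rule ext)
qed

text \<open>For \<open>a \<bullet> x = S * x $ i0 - v $ i0 * (\<Sum>i. x $ i)\<close> with \<open>S = (\<Sum>i. v $ i)\<close>, a permuted copy of \<open>v\<close>
  lies on the hyperplane \<open>a \<bullet> x = 0\<close> exactly when the permutation fixes \<open>i0\<close>.\<close>
lemma card_hyperplane_Int_sym_orbit_eq:
  fixes v :: "real ^ 'n"
  assumes "CARD('n) \<ge> 2" and distinct: "\<And>i j. i \<noteq> j \<Longrightarrow> v $ i \<noteq> v $ j"
    and sum: "(\<Sum>i\<in>UNIV. v $ i) \<noteq> 0"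
  shows "\<exists>H. lin_hyperplane H \<and> card (H \<inter> sym_orbit v) = fact (CARD('n) - 1)"
proof -
  have "\<not> CARD('n) \<le> Suc 0" using assms(1) by simp
  then obtain i0 i1 :: 'n where "i0 \<noteq> i1" by (auto simp: card_le_Suc0_iff_eq)
  define S where "S = (\<Sum>i\<in>UNIV. v $ i)"
  define a :: "real ^ 'n" where "a = S *\<^sub>R axis i0 1 - v $ i0 *\<^sub>R (\<chi> i. 1)"
  define f where "f = (\<lambda>\<sigma> :: 'n \<Rightarrow> 'n. \<chi> i. v $ \<sigma> i)"
  define H where "H = {x. a \<bullet> x = 0}"
  have "a \<noteq> 0"
  proof
    assume "a = 0"
    then have "a $ i0 = 0" "a $ i1 = 0" by simp_all
    then show False using \<open>i0 \<noteq> i1\<close> sum unfolding a_def S_def by (simp add: axis_def)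
  qed
  have on_H: "f \<sigma> \<in> H \<longleftrightarrow> \<sigma> i0 = i0" if "\<sigma> permutes UNIV" for \<sigma>
  proof -
    have "(\<chi> i. 1) \<bullet> f \<sigma> = S"
      unfolding S_def f_def inner_vec_def using sum.permute[OF that, of "\<lambda>i. v $ i"]
      by (simp add: comp_def)
    then have "a \<bullet> f \<sigma> = S * (v $ \<sigma> i0 - v $ i0)"
      unfolding a_def by (simp add: inner_diff_left inner_axis' f_def algebra_simps)
    moreover have "v $ \<sigma> i0 = v $ i0 \<longleftrightarrow> \<sigma> i0 = i0" using distinct[of "\<sigma> i0" i0] by auto
    ultimately show ?thesis using sum unfolding H_def S_def by simp
  qed
  have "inj f"
    unfolding f_def using distinct by (rule inj_permuted_copies)
  have orbit: "sym_orbit v = f ` {\<sigma>. \<sigma> permutes UNIV}"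
    unfolding f_def by (rule sym_orbit_eq_image)
  have "H \<inter> sym_orbit v = f ` {\<sigma>. \<sigma> permutes (UNIV - {i0})}"
    unfolding orbit permutes_Diff_singleton_iff using on_H by blast
  then have "card (H \<inter> sym_orbit v) = card {\<sigma>. \<sigma> permutes (UNIV - {i0})}"
    using \<open>inj f\<close> by (simp add: card_image inj_on_subset[of f UNIV])
  also have "\<dots> = fact (CARD('n) - 1)"
    by (rule card_permutations) simp_all
  finally have "card (H \<inter> sym_orbit v) = fact (CARD('n) - 1)" .
  moreover have "lin_hyperplane H"
    unfolding lin_hyperplane_def H_def using \<open>a \<noteq> 0\<close> by blast
  ultimately show ?thesis by blast
qed

definition generic_vector :: "real ^ 'n \<Rightarrow> bool" where
  "generic_vector v \<longleftrightarrow> (\<forall>i j. i \<noteq> j \<longrightarrow> v $ i \<noteq> v $ j) \<and> (\<Sum>i\<in>UNIV. v $ i) \<noteq> 0 \<and>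
    (\<forall>A. A \<subseteq> {\<sigma>. \<sigma> permutes UNIV} \<longrightarrow> fact (CARD('n) - 1) < card A \<longrightarrow> reindexings_span UNIV A v)"

lemma zariski_open_generic_vectors:
  "\<exists>U :: (real ^ 'n :: finite) set. zariski_open U \<and> U \<noteq> {} \<and> (\<forall>v\<in>U. generic_vector v)"
proof -
  define \<A> where "\<A> = {A. A \<subseteq> {\<sigma>. \<sigma> permutes (UNIV :: 'n set)} \<and> fact (CARD('n) - 1) < card A}"
  define F :: "(real ^ 'n \<Rightarrow> real) set" where
    "F = (\<lambda>A x. det (gram_matrix UNIV A x)) ` \<A> \<union>
      (\<lambda>p x. x $ fst p - x $ snd p) ` {p. fst p \<noteq> snd p} \<union> {\<lambda>x. \<Sum>i\<in>UNIV. x $ i}"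
  have "finite F" unfolding F_def by simp
  have gram: "poly_fun (\<lambda>x. det (gram_matrix UNIV A x))" "\<exists>x. det (gram_matrix UNIV A x) \<noteq> 0"
    if "A \<in> \<A>" for A
    using that exists_reindexings_span_perms[of A] reindexings_span_iff_det_gram_matrix[of A UNIV]
    unfolding \<A>_def by (simp_all add: poly_fun_det_gram_matrix)
  have diff: "poly_fun (\<lambda>x :: real ^ 'n. x $ i - x $ j)" "\<exists>x :: real ^ 'n. x $ i - x $ j \<noteq> 0"
    if "i \<noteq> j" for i j
    using that by (auto intro!: poly_fun_diff poly_fun_coord exI[of _ "axis i 1"] simp: axis_def)
  have sum: "poly_fun (\<lambda>x :: real ^ 'n. \<Sum>i\<in>UNIV. x $ i)" "\<exists>x :: real ^ 'n. (\<Sum>i\<in>UNIV. x $ i) \<noteq> 0"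
    by (auto intro!: poly_fun_sum poly_fun_coord exI[of _ "\<chi> i. 1"])
  have poly: "poly_fun f" and nonzero: "\<exists>x. f x \<noteq> 0" if "f \<in> F" for f
    using that gram diff sum unfolding F_def by (elim UnE imageE insertE emptyE; simp)+
  define U where "U = {x. \<forall>f\<in>F. f x \<noteq> 0}"
  have "zariski_open U"
    unfolding U_def using \<open>finite F\<close> poly by (rule zariski_open_common_nonroots)
  moreover have "U \<noteq> {}"
    unfolding U_def using poly_funs_common_nonroot[OF \<open>finite F\<close> poly nonzero] by blast
  moreover have "generic_vector v" if "v \<in> U" for v
  proof -
    have nonroot: "f v \<noteq> 0" if "f \<in> F" for f using \<open>v \<in> U\<close> that unfolding U_def by blast
    have "v $ i \<noteq> v $ j" if "i \<noteq> j" for i j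
    proof -
      have "(\<lambda>x. x $ i - x $ j) \<in> (\<lambda>p x. x $ fst p - x $ snd p) ` {p. fst p \<noteq> snd p}"
        using that by (intro image_eqI[of _ _ "(i, j)"]) simp_all
      then have "(\<lambda>x. x $ i - x $ j) \<in> F" unfolding F_def by blast
      then show ?thesis using nonroot by fastforce
    qed
    moreover have "(\<Sum>i\<in>UNIV. v $ i) \<noteq> 0"
      using nonroot unfolding F_def by blast
    moreover have "reindexings_span UNIV A v"
      if "A \<subseteq> {\<sigma>. \<sigma> permutes UNIV}" "fact (CARD('n) - 1) < card A" for A
      using nonroot[of "\<lambda>x. det (gram_matrix UNIV A x)"] that reindexings_span_iff_det_gram_matrix[of A]
      unfolding F_def \<A>_def by auto
    ultimately show ?thesis unfolding generic_vector_def by blast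
  qed
  ultimately show ?thesis by blast
qed

theorem proposition1p6:
  assumes "CARD('n::finite) \<ge> 2"
  shows "\<exists>U :: (real ^ 'n) set. zariski_open U \<and> U \<noteq> {} \<and>
    (\<forall>v\<in>U. (\<exists>H. lin_hyperplane H \<and> card (H \<inter> sym_orbit v) = fact (CARD('n) - 1)) \<and>
             (\<forall>H. lin_hyperplane H \<longrightarrow> card (H \<inter> sym_orbit v) \<le> fact (CARD('n) - 1)))"
proof -
  obtain U :: "(real ^ 'n) set" where U: "zariski_open U" "U \<noteq> {}"
    and generic: "\<And>v. v \<in> U \<Longrightarrow> generic_vector v"
    using zariski_open_generic_vectors by blast
  show ?thesis
  proof (rule exI[of _ U], intro conjI ballI allI impI)
    show "\<exists>H. lin_hyperplane H \<and> card (H \<inter> sym_orbit v) = fact (CARD('n) - 1)" if "v \<in> U" for v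
      using generic[OF that] unfolding generic_vector_def
      by (intro card_hyperplane_Int_sym_orbit_eq[OF assms]) simp_all
    show "card (H \<inter> sym_orbit v) \<le> fact (CARD('n) - 1)" if "v \<in> U" "lin_hyperplane H" for v H
      using generic[OF that(1)] unfolding generic_vector_def
      by (intro card_hyperplane_Int_sym_orbit_le[OF _ that(2)]) simp
  qed (fact U)+
qed

end
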